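(* For every integer $x\geq 3$ and each $i\in[1,8]$, there exists a $D_i$-decomposition of the digraph $K^*_{(2x)\times 7}-xK^*_{7,7}$, i.e.\ of the digraph with vertex set $H_1\cup\dots\cup H_{2x}$ (pairwise disjoint sets $H_j$ with $|H_j|=7$) whose arcs are all $(a,b)$ with $a\in H_j$, $b\in H_k$, $j\neq k$, except those with $\{j,k\}=\{2m-1,2m\}$ for some $m\in[1,x]$.
   Context: For a simple graph $G$, $G^*$ is the digraph with vertex set $V(G)$ and arc set $\bigcup_{\{x,y\}\in E(G)}\{(x,y),(y,x)\}$. $K_{r\times s}$ is the complete multipartite simple graph with $r$ parts each of size $s$, $K^*_{r\times s}=(K_{r\times s})^*$, and $K^*_{7,7}=(K_{7,7})^*$. A $D$-decomposition of a digraph $K$ is a set of subdigraphs of $K$, each isomorphic to $D$, such that every arc of $K$ lies in exactly one of them. For distinct vertices $v_0,\dots,v_6$, the digraphs $D_i[v_0,v_1,\dots,v_6]$ ($i\in[1,8]$) all have vertex set $\{v_0,\dots,v_6\}$ and the following arc sets: $D_1$: $(v_1,v_0),(v_1,v_2),(v_2,v_3),(v_3,v_4),(v_4,v_5),(v_5,v_6),(v_6,v_0)$; $D_2$: $(v_1,v_0),(v_2,v_1),(v_2,v_3),(v_3,v_4),(v_4,v_5),(v_5,v_6),(v_6,v_0)$; $D_3$: $(v_1,v_0),(v_1,v_2),(v_3,v_2),(v_3,v_4),(v_4,v_5),(v_5,v_6),(v_6,v_0)$; $D_4$: $(v_1,v_0),(v_1,v_2),(v_2,v_3),(v_4,v_3),(v_4,v_5),(v_5,v_6),(v_6,v_0)$;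 $D_5$: $(v_1,v_0),(v_2,v_1),(v_3,v_2),(v_3,v_4),(v_4,v_5),(v_5,v_6),(v_6,v_0)$; $D_6$: $(v_1,v_0),(v_2,v_1),(v_2,v_3),(v_3,v_4),(v_5,v_4),(v_5,v_6),(v_6,v_0)$; $D_7$: $(v_1,v_0),(v_1,v_2),(v_3,v_2),(v_3,v_4),(v_4,v_5),(v_6,v_5),(v_6,v_0)$; $D_8$: $(v_1,v_0),(v_2,v_1),(v_2,v_3),(v_4,v_3),(v_4,v_5),(v_5,v_6),(v_6,v_0)$. $D_i$ also denotes the isomorphism type of $D_i[v_0,\dots,v_6]$. *)

theory Defs
  imports Main
begin

type_synonym 'a digraph = "'a set \<times> ('a \<times> 'a) set"

definition verts :: "'a digraph \<Rightarrow> 'a set" where "verts G = fst G"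
definition arcs :: "'a digraph \<Rightarrow> ('a \<times> 'a) set" where "arcs G = snd G"

definition digraph_iso :: "'a digraph \<Rightarrow> 'b digraph \<Rightarrow> bool" where
  "digraph_iso G H \<longleftrightarrow> (\<exists>f. bij_betw f (verts G) (verts H) \<and>
       (\<lambda>(u,v). (f u, f v)) ` arcs G = arcs H)"

definition subdigraph :: "'a digraph \<Rightarrow> 'a digraph \<Rightarrow> bool" where
  "subdigraph S K \<longleftrightarrow> verts S \<subseteq> verts K \<and> arcs S \<subseteq> arcs K \<and>
       arcs S \<subseteq> verts S \<times> verts S"

definition is_decomposition :: "'b digraph \<Rightarrow> 'a digraph \<Rightarrow> 'a digraph set \<Rightarrow> bool" where
  "is_decomposition D K \<D> \<longleftrightarrow>
     (\<forall>S\<in>\<D>. subdigraph S K \<and> digraph_iso S D) \<and>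
     (\<forall>a\<in>arcs K. \<exists>!S. S \<in> \<D> \<and> a \<in> arcs S)"

text \<open>Arc sets of D_1,...,D_8 on vertices v_0..v_6 represented by 0..6.\<close>
definition D_arcs :: "nat \<Rightarrow> (nat \<times> nat) set" where
  "D_arcs i = (if i = 1 then {(1,0),(1,2),(2,3),(3,4),(4,5),(5,6),(6,0)}
    else if i = 2 then {(1,0),(2,1),(2,3),(3,4),(4,5),(5,6),(6,0)}
    else if i = 3 then {(1,0),(1,2),(3,2),(3,4),(4,5),(5,6),(6,0)}
    else if i = 4 then {(1,0),(1,2),(2,3),(4,3),(4,5),(5,6),(6,0)}
    else if i = 5 then {(1,0),(2,1),(3,2),(3,4),(4,5),(5,6),(6,0)}
    else if i = 6 then {(1,0),(2,1),(2,3),(3,4),(5,4),(5,6),(6,0)}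
    else if i = 7 then {(1,0),(1,2),(3,2),(3,4),(4,5),(6,5),(6,0)}
    else {(1,0),(2,1),(2,3),(4,3),(4,5),(5,6),(6,0)})"

definition Dgraph :: "nat \<Rightarrow> nat digraph" where
  "Dgraph i = ({0..<7}, D_arcs i)"

text \<open>K*_{(2x) x 7} - x K*_{7,7}: part H_{j+1} = {j} x {0..<7} for j < 2x (0-indexed);
  the removed pairs of parts are {H_{2m-1}, H_{2m}}, i.e. 0-indexed j, k with j div 2 = k div 2.\<close>
definition K_minus :: "nat \<Rightarrow> (nat \<times> nat) digraph" where
  "K_minus x = ({0..<2*x} \<times> {0..<7},
     {((j,s),(k,t)). j < 2*x \<and> k < 2*x \<and> s < 7 \<and> t < 7 \<and> j \<noteq> k \<and> j div 2 \<noteq> k div 2})"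

end

theory Submission
  imports Defs "HOL-Number_Theory.Cong" "HOL-Library.Product_Lexorder"
begin

text \<open>
  Write vertex \<open>s\<close> of part \<open>j\<close> as \<open>(g, b, s)\<close> with \<open>j = 2 g + b\<close>, so that the removed
  copies of \<open>K\<^sup>*\<^sub>7\<^sub>,\<^sub>7\<close> are exactly the pairs of parts with equal \<open>g\<close>. Take \<open>y\<close> odd
  with \<open>x = y\<close> or \<open>x = y + 1\<close>: the groups \<open>g < y\<close> are identified with \<open>\<int>\<^sub>y\<close>, and for even
  \<open>x\<close> there is one more group \<open>\<infinity>\<close>. The group \<open>\<int>\<^sub>y \<times> \<int>\<^sub>7\<close> acts freely on the arcs by
  translating \<open>g\<close> and \<open>s\<close>, and an orbit is determined by its label: the sides \<open>b, b'\<close>, the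
  difference \<open>s' - s\<close>, and the difference \<open>g' - g\<close> or which end lies in \<open>\<infinity>\<close>.

  A base copy of \<open>D\<^sub>i\<close> is given by symbolic points; a finite point \<open>(m, b, e)\<close> with
  \<open>m \<in> {0, 1, 2}\<close> is placed at \<open>(m r, b, e)\<close> for a multiplier \<open>0 < r < y\<close>. Four base copies
  whose 28 arcs have pairwise different \<open>(b, b', s' - s)\<close> provide, as \<open>r\<close> runs through
  \<open>1, \<dots>, y - 1\<close>, exactly one arc in every orbit with finite ends, because
  \<open>m' - m \<in> {\<plusminus>1, \<plusminus>2}\<close> is invertible modulo \<open>y\<close>. When \<open>\<infinity>\<close> is present, the copies for
  \<open>r = 1\<close> are replaced by twelve others with the same finite labels which in addition
  realise every label involving \<open>\<infinity>\<close> once. The translates of all base copies then form the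
  decomposition; the required properties of the explicit base copies are checked by evaluation.
\<close>

section \<open>Arithmetic modulo an odd number\<close>

lemma coprime_odd_small:
  fixes \<delta> :: int
  assumes "odd y" "\<delta> \<noteq> 0" "\<bar>\<delta>\<bar> \<le> 2"
  shows "coprime \<delta> (int y)"
proof -
  have "\<bar>\<delta>\<bar> = 1 \<or> \<bar>\<delta>\<bar> = 2" using assms(2,3) by linarith
  moreover have "coprime (2::int) (int y)" using assms(1) by simp
  ultimately show ?thesis by (metis coprime_1_left coprime_abs_left_iff)
qed

lemma mult_mod_inj:
  fixes \<delta> :: int
  assumes "coprime \<delta> (int y)" "r < y" "r' < y" "(\<delta> * int r) mod int y = (\<delta> * int r') mod int y"
  shows "r = r'"
proof -
  have "[int r = int r'] (mod int y)"
    using assms(1,4) cong_mult_lcancel unfolding cong_def by blast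
  then have "[r = r'] (mod y)" by (simp add: cong_int_iff)
  then show ?thesis using assms(2,3) cong_less_imp_eq_nat by blast
qed

lemma mult_mod_nonzero:
  fixes \<delta> :: int
  assumes "coprime \<delta> (int y)" "0 < r" "r < y"
  shows "(\<delta> * int r) mod int y \<noteq> 0"
  using mult_mod_inj[OF assms(1) assms(3), of 0] assms(2,3) by auto

lemma mult_mod_solvable:
  fixes \<delta> \<sigma> :: int
  assumes "coprime \<delta> (int y)" "0 < y" "\<sigma> mod int y \<noteq> 0"
  shows "\<exists>r. 0 < r \<and> r < y \<and> (\<delta> * int r) mod int y = \<sigma> mod int y"
proof -
  obtain x where x: "[\<delta> * x = \<sigma>] (mod int y)"
    using cong_solve_dvd_int assms(1) by (metis coprime_imp_gcd_eq_1 one_dvd)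
  have y: "0 < int y" using assms(2) by simp
  define r where "r = nat (x mod int y)"
  have r: "int r = x mod int y" using y unfolding r_def by simp
  have "int r < int y" unfolding r using y by simp
  then have "r < y" by (simp only: of_nat_less_iff)
  moreover have "(\<delta> * int r) mod int y = \<sigma> mod int y"
    using x unfolding r cong_def by (simp add: mod_mult_right_eq)
  moreover have "0 < r" using calculation assms(3) by (cases "r = 0") auto
  ultimately show ?thesis by blast
qed

lemma add_mult_mod_neq:
  fixes u m m' r y :: nat
  assumes "odd y" "0 < r" "r < y" "m \<le> 2" "m' \<le> 2" "m \<noteq> m'"
  shows "(u + m * r) mod y \<noteq> (u + m' * r) mod y"
proof
  assume "(u + m * r) mod y = (u + m' * r) mod y"
  then have "[u + m' * r = u + m * r] (mod y)" by (simp add: cong_def)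
  then have "[int (u + m' * r) = int (u + m * r)] (mod int y)"
    by (rule cong_int_iff[THEN iffD2])
  then have "int y dvd int (u + m' * r) - int (u + m * r)"
    by (rule cong_iff_dvd_diff[THEN iffD1])
  moreover have "int (u + m' * r) - int (u + m * r) = (int m' - int m) * int r"
    by (simp add: algebra_simps)
  ultimately have "((int m' - int m) * int r) mod int y = 0" by simp
  moreover have "coprime (int m' - int m) (int y)"
    using assms by (intro coprime_odd_small) auto
  ultimately show False using mult_mod_nonzero[of "int m' - int m" y r] assms(2,3) by simp
qed

lemma int_mod_diff_mod:
  "(int (a mod n) - int (b mod n)) mod int n = (int a - int b) mod int n"
  by (simp add: zmod_int mod_diff_eq)

lemma translation_mod_exists:
  fixes n a a' c c' :: nat
  assumes "c < n" "c' < n" "(int c' - int c) mod int n = (int a' - int a) mod int n"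
  shows "\<exists>t<n. (t + a) mod n = c \<and> (t + a') mod n = c'"
proof -
  have n: "0 < int n" using assms(1) by simp
  define t where "t = nat ((int c - int a) mod int n)"
  have t: "int t = (int c - int a) mod int n" using n unfolding t_def by simp
  have "int ((t + a) mod n) = int c"
    using assms(1) by (simp add: zmod_int t mod_add_left_eq)
  then have "(t + a) mod n = c" by (simp only: of_nat_eq_iff)
  moreover have "int ((t + a') mod n) = int c'"
  proof -
    have "int ((t + a') mod n) = (int a' + int t) mod int n" by (simp add: zmod_int add.commute)
    also have "\<dots> = (int a' + (int c - int a)) mod int n" unfolding t by (rule mod_add_right_eq)
    also have "\<dots> = (int c + (int a' - int a)) mod int n" by (simp add: algebra_simps)
    also have "\<dots> = (int c + (int a' - int a) mod int n) mod int n"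
      by (rule mod_add_right_eq[symmetric])
    also have "\<dots> = (int c + (int c' - int c) mod int n) mod int n" by (simp only: assms(3))
    also have "\<dots> = int c'" using assms(2) by (simp add: mod_add_right_eq)
    finally show ?thesis .
  qed
  then have "(t + a') mod n = c'" by (simp only: of_nat_eq_iff)
  moreover have "t < n"
  proof -
    have "int t < int n" unfolding t using n by simp
    then show ?thesis by (simp only: of_nat_less_iff)
  qed
  ultimately show ?thesis by blast
qed

lemma translation_mod_unique:
  fixes n a t t' :: nat
  assumes "t < n" "t' < n" "(t + a) mod n = (t' + a) mod n"
  shows "t = t'"
proof -
  have "[t + a = t' + a] (mod n)" using assms(3) by (simp only: cong_def)
  then have "[t = t'] (mod n)" by (simp only: cong_add_rcancel_nat)
  then show ?thesis using assms(1,2) cong_less_imp_eq_nat[of t n t'] by simp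
qed

lemma diff_mod_nonzero:
  fixes c c' n :: nat
  assumes "c < n" "c' < n" "c \<noteq> c'"
  shows "(int c' - int c) mod int n \<noteq> 0"
proof
  assume "(int c' - int c) mod int n = 0"
  then have "int c' mod int n = int c mod int n" by (simp add: mod_eq_dvd_iff dvd_eq_mod_eq_0)
  then show False using assms by simp
qed

section \<open>Images of digraphs\<close>

definition image_digraph :: "('a \<Rightarrow> 'b) \<Rightarrow> 'a digraph \<Rightarrow> 'b digraph" where
  "image_digraph f G = (f ` verts G, (\<lambda>(a, b). (f a, f b)) ` arcs G)"

lemma digraph_iso_image_digraph:
  assumes inj: "inj_on f (verts G)" and arcs: "arcs G \<subseteq> verts G \<times> verts G"
  shows "digraph_iso (image_digraph f G) G"
proof -
  let ?g = "the_inv_into (verts G) f"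
  have "bij_betw ?g (f ` verts G) (verts G)"
    by (rule bij_betw_the_inv_into[OF inj_on_imp_bij_betw[OF inj]])
  moreover have "(\<lambda>(u, v). (?g u, ?g v)) ` (\<lambda>(a, b). (f a, f b)) ` arcs G = arcs G"
  proof -
    have "(\<lambda>(a, b). (?g (f a), ?g (f b))) ` arcs G = id ` arcs G"
      using arcs the_inv_into_f_f[OF inj] by (intro image_cong) auto
    then show ?thesis by (simp add: image_image case_prod_beta)
  qed
  ultimately show ?thesis
    unfolding digraph_iso_def image_digraph_def by (auto simp: verts_def arcs_def)
qed

lemma subdigraph_image_digraph:
  assumes "f ` verts G \<subseteq> verts K" "(\<lambda>(a, b). (f a, f b)) ` arcs G \<subseteq> arcs K"
    and "arcs G \<subseteq> verts G \<times> verts G"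
  shows "subdigraph (image_digraph f G) K"
  using assms unfolding subdigraph_def image_digraph_def by (auto simp: verts_def arcs_def)

lemma is_decomposition_family:
  assumes "\<And>x. x \<in> X \<Longrightarrow> subdigraph (P x) K \<and> digraph_iso (P x) D"
    and "\<And>e. e \<in> arcs K \<Longrightarrow> \<exists>x\<in>X. e \<in> arcs (P x)"
    and "\<And>x x' e. x \<in> X \<Longrightarrow> x' \<in> X \<Longrightarrow> e \<in> arcs (P x) \<Longrightarrow> e \<in> arcs (P x') \<Longrightarrow> x = x'"
  shows "is_decomposition D K (P ` X)"
  unfolding is_decomposition_def
proof (intro conjI ballI)
  fix S assume "S \<in> P ` X"
  then show "subdigraph S K" "digraph_iso S D" using assms(1) by auto
next
  fix e assume "e \<in> arcs K"
  then obtain x where x: "x \<in> X" "e \<in> arcs (P x)" using assms(2) by blast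
  show "\<exists>!S. S \<in> P ` X \<and> e \<in> arcs S"
  proof (rule ex1I)
    show "P x \<in> P ` X \<and> e \<in> arcs (P x)" using x by simp
  next
    fix S assume S: "S \<in> P ` X \<and> e \<in> arcs S"
    then obtain x' where "x' \<in> X" "S = P x'" by blast
    then have "x' = x" using S x by (intro assms(3)) auto
    then show "S = P x" using \<open>S = P x'\<close> by simp
  qed
qed

lemma verts_K_minus: "verts (K_minus N) = {0..<2 * N} \<times> {0..<7}"
  by (simp add: K_minus_def verts_def)

lemma arcs_K_minus:
  "(v, w) \<in> arcs (K_minus N) \<longleftrightarrow>
    v \<in> verts (K_minus N) \<and> w \<in> verts (K_minus N) \<and> fst v div 2 \<noteq> fst w div 2"
  by (cases v; cases w) (auto simp: K_minus_def verts_def arcs_def)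

section \<open>Symbolic points and arc labels\<close>

datatype point = Fin nat nat nat | Infty nat nat

fun side :: "point \<Rightarrow> nat" where
  "side (Fin m b e) = b"
| "side (Infty b e) = b"

fun offset :: "point \<Rightarrow> nat" where
  "offset (Fin m b e) = e"
| "offset (Infty b e) = e"

fun is_infty :: "point \<Rightarrow> bool" where
  "is_infty (Fin m b e) \<longleftrightarrow> False"
| "is_infty (Infty b e) \<longleftrightarrow> True"

fun point_ok :: "point \<Rightarrow> bool" where
  "point_ok (Fin m b e) \<longleftrightarrow> m \<le> 2 \<and> b < 2 \<and> e < 7"
| "point_ok (Infty b e) \<longleftrightarrow> b < 2 \<and> e < 7"

fun point_group :: "nat \<Rightarrow> nat \<Rightarrow> nat \<Rightarrow> point \<Rightarrow> nat" where
  "point_group y r u (Fin m b e) = (u + m * r) mod y"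
| "point_group y r u (Infty b e) = y"

definition place :: "nat \<Rightarrow> nat \<Rightarrow> nat \<Rightarrow> nat \<Rightarrow> point \<Rightarrow> nat \<times> nat" where
  "place y r u t p = (2 * point_group y r u p + side p, (t + offset p) mod 7)"

lemma snd_place: "snd (place y r u t p) = (t + offset p) mod 7"
  by (simp add: place_def)

lemma point_group_infty: "is_infty p \<Longrightarrow> point_group y r u p = y"
  by (cases p) auto

lemma point_group_less: "0 < y \<Longrightarrow> \<not> is_infty p \<Longrightarrow> point_group y r u p < y"
  by (cases p) auto

lemma place_eq_iff:
  assumes "side p < 2" "side q < 2"
  shows "place y r u t p = place y r' u' t' q \<longleftrightarrow>
    point_group y r u p = point_group y r' u' q \<and> side p = side q \<and>
    (t + offset p) mod 7 = (t' + offset q) mod 7"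
proof -
  have "2 * g + b = 2 * g' + b' \<longleftrightarrow> g = g' \<and> b = b'" if "b < 2" "b' < 2" for g g' b b' :: nat
    using that by arith
  then show ?thesis using assms unfolding place_def by auto
qed

lemma place_div_mod:
  assumes "side p < 2"
  shows "fst (place y r u t p) div 2 = point_group y r u p" "fst (place y r u t p) mod 2 = side p"
  using assms unfolding place_def by auto

lemma place_inj:
  assumes "odd y" "0 < r" "r < y" "point_ok p" "point_ok q"
    and eq: "place y r u t p = place y r u t q"
  shows "p = q"
proof -
  have sides: "side p < 2" "side q < 2" using assms(4,5) by (cases p; cases q; simp)+
  have offsets: "offset p < 7" "offset q < 7" using assms(4,5) by (cases p; cases q; simp)+
  have g: "point_group y r u p = point_group y r u q" and b: "side p = side q"
    and "(offset p + t) mod 7 = (offset q + t) mod 7"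
    using eq unfolding place_eq_iff[OF sides] by (simp_all add: add.commute)
  then have e: "offset p = offset q" using translation_mod_unique offsets by blast
  show ?thesis
  proof (cases p; cases q)
    fix m b e m' b' e' assume pq: "p = Fin m b e" "q = Fin m' b' e'"
    have "m \<le> 2" "m' \<le> 2" using assms(4,5) pq by auto
    moreover have "(u + m * r) mod y = (u + m' * r) mod y" using g pq by simp
    ultimately have "m = m'" using add_mult_mod_neq[OF assms(1-3)] by blast
    then show ?thesis using pq b e by simp
  next
    fix m b e b' e' assume "p = Fin m b e" "q = Infty b' e'"
    then show ?thesis using g point_group_less[of y p r u] assms(3) by simp
  next
    fix b e m' b' e' assume "p = Infty b e" "q = Fin m' b' e'"
    then show ?thesis using g point_group_less[of y q r u] assms(3) by simp
  next
    fix b e b' e' assume "p = Infty b e" "q = Infty b' e'"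
    then show ?thesis using b e by simp
  qed
qed

lemma place_translation_unique:
  assumes "\<not> is_infty p" "u < y" "u' < y" "t < 7" "t' < 7" "side p < 2"
    and "place y r u t p = place y r u' t' p"
  shows "u = u' \<and> t = t'"
proof -
  obtain m b e where p: "p = Fin m b e" using assms(1) by (cases p) auto
  have "(u + m * r) mod y = (u' + m * r) mod y \<and> (t + e) mod 7 = (t' + e) mod 7"
    using assms(7) unfolding p place_def by simp
  then show ?thesis using translation_mod_unique assms(2-5) by blast
qed

lemma place_arc_unique:
  assumes "\<not> (is_infty p \<and> is_infty q)" "point_ok p" "point_ok q"
    and "u < y" "u' < y" "t < 7" "t' < 7"
    and "place y r u t p = place y r u' t' p" "place y r u t q = place y r u' t' q"
  shows "u = u' \<and> t = t'"
proof -
  have "side p < 2" "side q < 2" using assms(2,3) by (cases p; cases q; simp)+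
  then show ?thesis using assms place_translation_unique by blast
qed

datatype arc_kind = Out | In | Step int

type_synonym label = "arc_kind \<times> nat \<times> nat \<times> int"

fun kind :: "point \<Rightarrow> point \<Rightarrow> arc_kind" where
  "kind (Infty b e) q = Out"
| "kind (Fin m b e) (Infty b' e') = In"
| "kind (Fin m b e) (Fin m' b' e') = Step (int m' - int m)"

definition shape :: "point \<Rightarrow> point \<Rightarrow> nat \<times> nat \<times> int" where
  "shape p q = (side p, side q, (int (offset q) - int (offset p)) mod 7)"

definition point_label :: "point \<Rightarrow> point \<Rightarrow> label" where
  "point_label p q = (kind p q, shape p q)"

fun scale_kind :: "nat \<Rightarrow> nat \<Rightarrow> arc_kind \<Rightarrow> arc_kind" where
  "scale_kind y r (Step \<delta>) = Step ((\<delta> * int r) mod int y)"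
| "scale_kind y r Out = Out"
| "scale_kind y r In = In"

definition group_kind :: "nat \<Rightarrow> nat \<Rightarrow> nat \<Rightarrow> arc_kind" where
  "group_kind y g g' =
    (if g = y then Out else if g' = y then In else Step ((int g' - int g) mod int y))"

definition arc_label :: "nat \<Rightarrow> (nat \<times> nat) \<times> (nat \<times> nat) \<Rightarrow> label" where
  "arc_label y = (\<lambda>(v, w). (group_kind y (fst v div 2) (fst w div 2),
     fst v mod 2, fst w mod 2, (int (snd w) - int (snd v)) mod 7))"

lemma kind_infty_iff: "kind p q \<in> {Out, In} \<longleftrightarrow> is_infty p \<or> is_infty q"
  by (cases p; cases q) auto

lemma scale_kind_infty_iff: "scale_kind y r k \<in> {Out, In} \<longleftrightarrow> k \<in> {Out, In}"
  by (cases k) auto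

lemma scale_kind_infty: "k \<in> {Out, In} \<Longrightarrow> scale_kind y r k = k"
  by auto

lemma group_kind_place:
  assumes "0 < y" "\<not> (is_infty p \<and> is_infty q)"
  shows "group_kind y (point_group y r u p) (point_group y r u q) = scale_kind y r (kind p q)"
proof (cases p; cases q)
  fix m b e m' b' e' assume pq: "p = Fin m b e" "q = Fin m' b' e'"
  have "(int ((u + m' * r) mod y) - int ((u + m * r) mod y)) mod int y
      = ((int m' - int m) * int r) mod int y"
    unfolding int_mod_diff_mod by (simp add: algebra_simps)
  moreover have "(u + m * r) mod y \<noteq> y" "(u + m' * r) mod y \<noteq> y"
    using mod_less_divisor[OF assms(1)] by (metis less_not_refl)+
  ultimately show ?thesis using pq by (simp add: group_kind_def)
next
  fix m b e b' e' assume pq: "p = Fin m b e" "q = Infty b' e'"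
  have "(u + m * r) mod y \<noteq> y" using mod_less_divisor[OF assms(1)] by (metis less_not_refl)
  then show ?thesis using pq by (simp add: group_kind_def)
qed (use assms(2) in \<open>auto simp: group_kind_def\<close>)

lemma arc_label_place:
  assumes "0 < y" "point_ok p" "point_ok q" "\<not> (is_infty p \<and> is_infty q)"
  shows "arc_label y (place y r u t p, place y r u t q) = (scale_kind y r (kind p q), shape p q)"
proof -
  have sides: "side p < 2" "side q < 2" using assms(2,3) by (cases p; cases q; simp)+
  have offsets: "(int ((t + offset q) mod 7) - int ((t + offset p) mod 7)) mod 7
      = (int (offset q) - int (offset p)) mod 7"
    using int_mod_diff_mod[of "t + offset q" 7 "t + offset p"] by simp
  have "arc_label y (place y r u t p, place y r u t q)
    = (group_kind y (point_group y r u p) (point_group y r u q),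
       side p, side q, (int ((t + offset q) mod 7) - int ((t + offset p) mod 7)) mod 7)"
    unfolding arc_label_def by (simp add: place_div_mod sides snd_place)
  then show ?thesis by (simp only: group_kind_place[OF assms(1,4)] offsets shape_def)
qed

lemma point_groups_exist:
  assumes "\<not> (is_infty p \<and> is_infty q)" "g \<le> y" "g' \<le> y" "g \<noteq> g'"
    and "group_kind y g g' = scale_kind y r (kind p q)"
  shows "\<exists>u<y. point_group y r u p = g \<and> point_group y r u q = g'"
proof (cases p; cases q)
  fix m b e m' b' e' assume pq: "p = Fin m b e" "q = Fin m' b' e'"
  then have g: "g < y" "g' < y"
    and "(int g' - int g) mod int y = ((int m' - int m) * int r) mod int y"
    using assms(2-5) by (auto simp: group_kind_def split: if_splits)
  moreover have "(int m' - int m) * int r = int (m' * r) - int (m * r)" by (simp add: algebra_simps)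
  ultimately have "(int g' - int g) mod int y = (int (m' * r) - int (m * r)) mod int y" by simp
  from translation_mod_exists[OF g this] show ?thesis using pq by simp
next
  fix m b e b' e' assume pq: "p = Fin m b e" "q = Infty b' e'"
  then have "g < y" "g' = y" using assms(2-5) by (auto simp: group_kind_def split: if_splits)
  with translation_mod_exists[where n = y and a = "m * r" and a' = "m * r" and c = g and c' = g]
  show ?thesis using pq by simp
next
  fix b e m' b' e' assume pq: "p = Infty b e" "q = Fin m' b' e'"
  then have "g = y" "g' < y" using assms(2-5) by (auto simp: group_kind_def split: if_splits)
  with translation_mod_exists[where n = y and a = "m' * r" and a' = "m' * r" and c = g' and c' = g']
  show ?thesis using pq by simp
qed (use assms(1) in auto)

lemma place_arc_exists:
  assumes "point_ok p" "point_ok q" "\<not> (is_infty p \<and> is_infty q)"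
    and "fst v div 2 \<le> y" "fst w div 2 \<le> y" "fst v div 2 \<noteq> fst w div 2" "snd v < 7" "snd w < 7"
    and label: "arc_label y (v, w) = (scale_kind y r (kind p q), shape p q)"
  shows "\<exists>u<y. \<exists>t<7. place y r u t p = v \<and> place y r u t q = w"
proof -
  have sides: "fst v mod 2 = side p" "fst w mod 2 = side q"
    and offsets: "(int (snd w) - int (snd v)) mod 7 = (int (offset q) - int (offset p)) mod 7"
    and kinds: "group_kind y (fst v div 2) (fst w div 2) = scale_kind y r (kind p q)"
    using label unfolding arc_label_def shape_def by simp_all
  obtain u where u: "u < y" "point_group y r u p = fst v div 2" "point_group y r u q = fst w div 2"
    using point_groups_exist[OF assms(3-6) kinds] by blast
  have "\<exists>t<7. (t + offset p) mod 7 = snd v \<and> (t + offset q) mod 7 = snd w"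
    using translation_mod_exists[where n = 7 and a = "offset p" and a' = "offset q"
        and c = "snd v" and c' = "snd w"] assms(7,8) offsets
    by simp
  then obtain t where t: "t < 7" "(t + offset p) mod 7 = snd v" "(t + offset q) mod 7 = snd w"
    by blast
  have "place y r u t p = v" "place y r u t q = w"
    using u t unfolding place_def by (simp_all add: prod_eq_iff flip: sides)
  then show ?thesis using u(1) t(1) by blast
qed

definition arc_indices :: "(nat \<times> nat) list \<Rightarrow> point list list \<Rightarrow> (nat \<times> nat \<times> nat) list" where
  "arc_indices as blks = [(n, a, b). n \<leftarrow> [0..<length blks], (a, b) \<leftarrow> as]"

definition block_label :: "point list list \<Rightarrow> nat \<times> nat \<times> nat \<Rightarrow> label" where
  "block_label blks = (\<lambda>(n, a, b). point_label (blks ! n ! a) (blks ! n ! b))"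

definition arc_labels :: "(nat \<times> nat) list \<Rightarrow> point list list \<Rightarrow> label list" where
  "arc_labels as blks = map (block_label blks) (arc_indices as blks)"

definition all_shapes :: "(nat \<times> nat \<times> int) list" where
  "all_shapes = List.product [0..<2] (List.product [0..<2] [0..6])"

definition blocks_ok :: "point list list \<Rightarrow> bool" where
  "blocks_ok blks \<longleftrightarrow> (\<forall>blk \<in> set blks. length blk = 7 \<and> distinct blk \<and> (\<forall>p \<in> set blk. point_ok p))"

text \<open>\<open>R\<close> holds the base copies used for every multiplier, \<open>S\<close> those replacing them for the
  multiplier \<open>1\<close> when the group \<open>\<infinity>\<close> is present.\<close>

definition certificate :: "(nat \<times> nat) list \<Rightarrow> point list list \<Rightarrow> point list list \<Rightarrow> bool" where
  "certificate as R S \<longleftrightarrow>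
     blocks_ok R \<and> blocks_ok S \<and> (\<forall>blk \<in> set R. \<forall>p \<in> set blk. \<not> is_infty p)
   \<and> distinct (map snd (arc_labels as R)) \<and> set all_shapes \<subseteq> snd ` set (arc_labels as R)
   \<and> Step 0 \<notin> fst ` set (arc_labels as R)
   \<and> distinct (arc_labels as S)
   \<and> set [l \<leftarrow> arc_labels as S. fst l \<notin> {Out, In}] = set (arc_labels as R)
   \<and> {Out, In} \<times> set all_shapes \<subseteq> set (arc_labels as S)
   \<and> (\<forall>blk \<in> set S. \<forall>(a, b) \<in> set as. \<not> (is_infty (blk ! a) \<and> is_infty (blk ! b)))"

lemma set_arc_indices: "set (arc_indices as blks) = {(n, a, b). n < length blks \<and> (a, b) \<in> set as}"
  unfolding arc_indices_def by auto

lemma all_shapes_complete: "b < 2 \<Longrightarrow> b' < 2 \<Longrightarrow> 0 \<le> d \<Longrightarrow> d < 7 \<Longrightarrow> (b, b', d) \<in> set all_shapes"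
  unfolding all_shapes_def by simp

lemma set_arc_labels: "set (arc_labels as blks) = block_label blks ` set (arc_indices as blks)"
  unfolding arc_labels_def by simp

lemma arc_labelsE:
  assumes "l \<in> set (arc_labels as blks)"
  obtains n a b where "(n, a, b) \<in> set (arc_indices as blks)" "block_label blks (n, a, b) = l"
  using assms unfolding set_arc_labels by force

lemma blocks_ok_nth:
  assumes "blocks_ok blks" "n < length blks"
  shows "k < 7 \<Longrightarrow> point_ok (blks ! n ! k)" and "inj_on (\<lambda>k. blks ! n ! k) {0..<7}"
proof -
  have "length (blks ! n) = 7" "distinct (blks ! n)" "\<forall>p \<in> set (blks ! n). point_ok p"
    using assms nth_mem unfolding blocks_ok_def by blast+
  then show "k < 7 \<Longrightarrow> point_ok (blks ! n ! k)" "inj_on (\<lambda>k. blks ! n ! k) {0..<7}"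
    by (auto intro: inj_on_nth)
qed

locale translation_decomposition =
  fixes as :: "(nat \<times> nat) list" and R S :: "point list list" and y :: nat and with_infty :: bool
  assumes certificate: "certificate as R S"
    and arcs_less: "\<And>a b. (a, b) \<in> set as \<Longrightarrow> a < 7 \<and> b < 7"
    and odd_y: "odd y" and y_gt_1: "1 < y"
begin

definition level :: "nat \<Rightarrow> point list list" where
  "level r = (if with_infty \<and> r = 1 then S else R)"

definition n_groups :: nat where
  "n_groups = (if with_infty then y + 1 else y)"

definition pattern :: "nat digraph" where
  "pattern = ({0..<7}, set as)"

definition piece :: "nat \<times> nat \<times> nat \<times> nat \<Rightarrow> (nat \<times> nat) digraph" where
  "piece = (\<lambda>(r, n, u, t). image_digraph (\<lambda>k. place y r u t (level r ! n ! k)) pattern)"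

definition piece_indices :: "(nat \<times> nat \<times> nat \<times> nat) set" where
  "piece_indices = {(r, n, u, t). 0 < r \<and> r < y \<and> n < length (level r) \<and> u < y \<and> t < 7}"

definition base_arcs :: "(nat \<times> nat \<times> nat \<times> nat) set" where
  "base_arcs = {(r, n, a, b). 0 < r \<and> r < y \<and> (n, a, b) \<in> set (arc_indices as (level r))}"

definition base_label :: "nat \<times> nat \<times> nat \<times> nat \<Rightarrow> label" where
  "base_label = (\<lambda>(r, n, a, b).
     let l = block_label (level r) (n, a, b) in (scale_kind y r (fst l), snd l))"

lemma level_eq_R: "\<not> (with_infty \<and> r = 1) \<Longrightarrow> level r = R"
  unfolding level_def by (rule if_not_P)

lemma level_eq_S: "with_infty \<and> r = 1 \<Longrightarrow> level r = S"
  unfolding level_def by (rule if_P)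

lemma y_pos: "0 < y"
  using y_gt_1 by simp

lemma R_ok: "blocks_ok R" and S_ok: "blocks_ok S"
  using certificate unfolding certificate_def by simp_all

lemma level_ok: "blocks_ok (level r)"
  using R_ok S_ok by (simp add: level_def)

lemma level_point_ok: "n < length (level r) \<Longrightarrow> k < 7 \<Longrightarrow> point_ok (level r ! n ! k)"
  using blocks_ok_nth(1)[OF level_ok] .

lemma level_infty:
  assumes "n < length (level r)" "is_infty (level r ! n ! k)" "k < 7"
  shows "with_infty \<and> r = 1"
proof (rule ccontr)
  assume "\<not> (with_infty \<and> r = 1)"
  then have "level r = R" by (rule level_eq_R)
  then show False
    using assms certificate R_ok nth_mem unfolding certificate_def blocks_ok_def by metis
qed

lemma level_no_infty_arc:
  assumes "(n, a, b) \<in> set (arc_indices as (level r))"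
  shows "\<not> (is_infty (level r ! n ! a) \<and> is_infty (level r ! n ! b))"
proof (cases "with_infty \<and> r = 1")
  case True
  then show ?thesis using assms certificate nth_mem
    unfolding certificate_def level_eq_S[OF True] set_arc_indices by fastforce
next
  case False
  then show ?thesis using assms level_infty arcs_less unfolding set_arc_indices by blast
qed

lemma level_label_infty:
  assumes "(n, a, b) \<in> set (arc_indices as (level r))"
    and "fst (block_label (level r) (n, a, b)) \<in> {Out, In}"
  shows "with_infty \<and> r = 1"
proof -
  have "is_infty (level r ! n ! a) \<or> is_infty (level r ! n ! b)"
    using assms(2) kind_infty_iff by (simp add: block_label_def point_label_def)
  moreover have "n < length (level r)" "a < 7" "b < 7"
    using assms(1) arcs_less unfolding set_arc_indices by auto
  ultimately show ?thesis using level_infty by blast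
qed

lemma block_label_inj_level: "inj_on (block_label (level r)) (set (arc_indices as (level r)))"
proof (cases "with_infty \<and> r = 1")
  case True
  then show ?thesis using certificate
    unfolding certificate_def level_eq_S[OF True] arc_labels_def distinct_map by simp
next
  case False
  then show ?thesis using certificate
    unfolding certificate_def level_eq_R[OF False] arc_labels_def distinct_map by simp
qed

lemma reg_labels_in_level: "set (arc_labels as R) \<subseteq> set (arc_labels as (level r))"
  using certificate level_eq_R level_eq_S unfolding certificate_def
  by (cases "with_infty \<and> r = 1") auto

lemma level_finite_label:
  "l \<in> set (arc_labels as (level r)) \<Longrightarrow> fst l \<notin> {Out, In} \<Longrightarrow> l \<in> set (arc_labels as R)"
  using certificate level_eq_R level_eq_S unfolding certificate_def
  by (cases "with_infty \<and> r = 1") auto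

lemma reg_label_step:
  assumes "l \<in> set (arc_labels as R)"
  shows "\<exists>\<delta>. fst l = Step \<delta> \<and> coprime \<delta> (int y)"
proof -
  obtain n a b where nab: "(n, a, b) \<in> set (arc_indices as R)" "l = block_label R (n, a, b)"
    using assms by (rule arc_labelsE) simp
  then have "n < length R" "a < 7" "b < 7" using arcs_less unfolding set_arc_indices by auto
  then have ok: "point_ok (R ! n ! a)" "point_ok (R ! n ! b)"
    and fin: "\<not> is_infty (R ! n ! a)" "\<not> is_infty (R ! n ! b)"
    using blocks_ok_nth(1)[OF R_ok] certificate nth_mem unfolding certificate_def blocks_ok_def
    by (metis, metis, metis+)
  obtain m e c m' e' c' where pts: "R ! n ! a = Fin m e c" "R ! n ! b = Fin m' e' c'"
    using fin by (cases "R ! n ! a"; cases "R ! n ! b") auto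
  have l: "fst l = Step (int m' - int m)"
    using nab pts by (simp add: block_label_def point_label_def)
  moreover have "int m' - int m \<noteq> 0"
    using l assms certificate unfolding certificate_def by (metis image_eqI)
  moreover have "\<bar>int m' - int m\<bar> \<le> 2" using ok pts by auto
  ultimately show ?thesis using coprime_odd_small[OF odd_y] by blast
qed

lemma reg_label_by_shape:
  "l \<in> set (arc_labels as R) \<Longrightarrow> l' \<in> set (arc_labels as R) \<Longrightarrow> snd l = snd l' \<Longrightarrow> l = l'"
  using certificate unfolding certificate_def distinct_map by (auto dest: inj_onD)

lemma reg_shape_exists: "sh \<in> set all_shapes \<Longrightarrow> \<exists>l \<in> set (arc_labels as R). snd l = sh"
  using certificate unfolding certificate_def by auto

lemma special_infty_label: "k \<in> {Out, In} \<Longrightarrow> sh \<in> set all_shapes \<Longrightarrow> (k, sh) \<in> set (arc_labels as S)"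
  using certificate unfolding certificate_def by blast

lemma base_label_eq:
  "base_label (r, n, a, b) =
    (scale_kind y r (kind (level r ! n ! a) (level r ! n ! b)), shape (level r ! n ! a) (level r ! n ! b))"
  by (simp add: base_label_def block_label_def point_label_def)

lemma base_label_inj:
  assumes x: "(r, n, a, b) \<in> base_arcs" and x': "(r', n', a', b') \<in> base_arcs"
    and eq: "base_label (r, n, a, b) = base_label (r', n', a', b')"
  shows "(r, n, a, b) = (r', n', a', b')"
proof -
  define l where "l = block_label (level r) (n, a, b)"
  define l' where "l' = block_label (level r') (n', a', b')"
  have idx: "(n, a, b) \<in> set (arc_indices as (level r))"
    "(n', a', b') \<in> set (arc_indices as (level r'))"
    using x x' unfolding base_arcs_def by auto
  then have labels: "l \<in> set (arc_labels as (level r))" "l' \<in> set (arc_labels as (level r'))"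
    unfolding l_def l'_def set_arc_labels by auto
  have kinds: "scale_kind y r (fst l) = scale_kind y r' (fst l')" and shapes: "snd l = snd l'"
    using eq unfolding base_label_def l_def l'_def by (simp_all add: Let_def)
  have "r = r' \<and> l = l'"
  proof (cases "fst l \<in> {Out, In}")
    case True
    then have "fst l' = fst l" using kinds scale_kind_infty scale_kind_infty_iff by metis
    then have "l = l'" using shapes by (simp add: prod_eq_iff)
    have "with_infty \<and> r = 1" "with_infty \<and> r' = 1"
      using level_label_infty idx True \<open>fst l' = fst l\<close> unfolding l_def l'_def by metis+
    then show ?thesis using \<open>l = l'\<close> by simp
  next
    case False
    then have "fst l' \<notin> {Out, In}" using kinds scale_kind_infty_iff by metis
    then have reg: "l \<in> set (arc_labels as R)" "l' \<in> set (arc_labels as R)"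
      using False labels level_finite_label by blast+
    then have "l = l'" using shapes reg_label_by_shape by blast
    obtain \<delta> where \<delta>: "fst l = Step \<delta>" "coprime \<delta> (int y)" using reg_label_step reg(1) by blast
    have "(\<delta> * int r) mod int y = (\<delta> * int r') mod int y"
      using kinds \<delta>(1) \<open>l = l'\<close> by simp
    then have "r = r'" using mult_mod_inj[OF \<delta>(2)] x x' unfolding base_arcs_def by blast
    then show ?thesis using \<open>l = l'\<close> by simp
  qed
  then show ?thesis using idx block_label_inj_level unfolding l_def l'_def by (auto dest: inj_onD)
qed

lemma base_label_infty:
  assumes "with_infty" "k \<in> {Out, In}" "sh \<in> set all_shapes"
  shows "\<exists>x \<in> base_arcs. base_label x = (k, sh)"
proof -
  obtain n a b where nab: "(n, a, b) \<in> set (arc_indices as S)" "block_label S (n, a, b) = (k, sh)"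
    using special_infty_label[OF assms(2,3)] by (rule arc_labelsE)
  have "level 1 = S" using assms(1) by (intro level_eq_S) simp
  then have "(1, n, a, b) \<in> base_arcs" "base_label (1, n, a, b) = (k, sh)"
    using nab assms(2) y_gt_1 unfolding base_arcs_def base_label_def by auto
  then show ?thesis by blast
qed

lemma base_label_step:
  assumes "\<sigma> mod int y \<noteq> 0" "sh \<in> set all_shapes"
  shows "\<exists>x \<in> base_arcs. base_label x = (Step (\<sigma> mod int y), sh)"
proof -
  obtain l where l: "l \<in> set (arc_labels as R)" "snd l = sh"
    using reg_shape_exists[OF assms(2)] by blast
  obtain \<delta> where \<delta>: "fst l = Step \<delta>" "coprime \<delta> (int y)" using reg_label_step[OF l(1)] by blast
  obtain r where r: "0 < r" "r < y" "(\<delta> * int r) mod int y = \<sigma> mod int y"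
    using mult_mod_solvable[OF \<delta>(2) y_pos assms(1)] by blast
  have "l \<in> set (arc_labels as (level r))" using l(1) reg_labels_in_level by blast
  then obtain n a b where
    nab: "(n, a, b) \<in> set (arc_indices as (level r))" "block_label (level r) (n, a, b) = l"
    by (rule arc_labelsE)
  have "(r, n, a, b) \<in> base_arcs" using nab r unfolding base_arcs_def by simp
  moreover have "base_label (r, n, a, b) = (Step (\<sigma> mod int y), sh)"
    using nab \<delta> l(2) r(3) unfolding base_label_def by (simp add: Let_def)
  ultimately show ?thesis by blast
qed

lemma base_label_covers:
  assumes e: "(v, w) \<in> arcs (K_minus n_groups)"
  shows "\<exists>x \<in> base_arcs. base_label x = arc_label y (v, w)"
proof -
  define g g' where "g = fst v div 2" and "g' = fst w div 2"
  define sh where "sh = (fst v mod 2, fst w mod 2, (int (snd w) - int (snd v)) mod 7)"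
  have K: "g < n_groups" "g' < n_groups" "g \<noteq> g'"
    using e unfolding arcs_K_minus verts_K_minus g_def g'_def by auto
  have sh: "sh \<in> set all_shapes" unfolding sh_def by (rule all_shapes_complete) simp_all
  have label: "arc_label y (v, w) = (group_kind y g g', sh)"
    unfolding arc_label_def g_def g'_def sh_def by simp
  consider "g = y" | "g \<noteq> y" "g' = y" | "g \<noteq> y" "g' \<noteq> y" by blast
  then show ?thesis
  proof cases
    case 1
    then have "with_infty" using K unfolding n_groups_def by (auto split: if_splits)
    then show ?thesis
      using base_label_infty[of Out, OF _ _ sh] 1 label by (simp add: group_kind_def)
  next
    case 2
    then have "with_infty" using K unfolding n_groups_def by (auto split: if_splits)
    then show ?thesis
      using base_label_infty[of In, OF _ _ sh] 2 label by (simp add: group_kind_def)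
  next
    case 3
    then have "g < y" "g' < y" using K unfolding n_groups_def by (auto split: if_splits)
    then have "(int g' - int g) mod int y \<noteq> 0" using diff_mod_nonzero K(3) by simp
    then show ?thesis using base_label_step[OF _ sh] 3 label by (simp add: group_kind_def)
  qed
qed

lemma piece_arcs:
  "e \<in> arcs (piece (r, n, u, t)) \<longleftrightarrow>
    (\<exists>a b. (a, b) \<in> set as \<and>
      e = (place y r u t (level r ! n ! a), place y r u t (level r ! n ! b)))"
  by (auto simp: piece_def image_digraph_def pattern_def arcs_def)

lemma piece_arc_label:
  assumes "n < length (level r)" "(a, b) \<in> set as"
  shows "arc_label y (place y r u t (level r ! n ! a), place y r u t (level r ! n ! b))
    = base_label (r, n, a, b)"
proof -
  have "(n, a, b) \<in> set (arc_indices as (level r))" using assms unfolding set_arc_indices by simp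
  then show ?thesis
    using arc_label_place[OF y_pos] level_point_ok level_no_infty_arc assms arcs_less
    unfolding base_label_eq by blast
qed

lemma place_in_verts:
  assumes "n < length (level r)" "k < 7"
  shows "place y r u t (level r ! n ! k) \<in> verts (K_minus n_groups)"
proof -
  let ?p = "level r ! n ! k"
  have ok: "side ?p < 2" using level_point_ok[OF assms] by (cases ?p) auto
  have "point_group y r u ?p < n_groups"
  proof (cases "is_infty ?p")
    case True
    then have "with_infty" using level_infty[OF assms(1) True assms(2)] by blast
    then have "n_groups = y + 1" unfolding n_groups_def by simp
    then show ?thesis using point_group_infty[OF True] by simp
  next
    case False
    have "y \<le> n_groups" unfolding n_groups_def by simp
    then show ?thesis using point_group_less[OF y_pos False] by (meson less_le_trans)
  qed
  then show ?thesis using ok unfolding verts_K_minus place_def by auto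
qed

lemma piece_arc_in_K:
  assumes "0 < r" "r < y" "n < length (level r)" "(a, b) \<in> set as"
  shows "(place y r u t (level r ! n ! a), place y r u t (level r ! n ! b))
    \<in> arcs (K_minus n_groups)"
proof -
  let ?p = "level r ! n ! a" and ?q = "level r ! n ! b"
  have ab: "a < 7" "b < 7" using arcs_less assms(4) by auto
  have idx: "(n, a, b) \<in> set (arc_indices as (level r))"
    using assms(3,4) unfolding set_arc_indices by simp
  have ok: "point_ok ?p" "point_ok ?q" using level_point_ok assms(3) ab by auto
  then have sides: "side ?p < 2" "side ?q < 2" by (cases ?p; cases ?q; simp)+
  have "point_group y r u ?p \<noteq> point_group y r u ?q"
  proof (cases ?p; cases ?q)
    fix m e c m' e' c' assume pq: "?p = Fin m e c" "?q = Fin m' e' c'"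
    have kind: "fst (block_label (level r) (n, a, b)) = Step (int m' - int m)"
      using pq by (simp add: block_label_def point_label_def)
    have "block_label (level r) (n, a, b) \<in> set (arc_labels as (level r))"
      using idx unfolding set_arc_labels by simp
    then have "block_label (level r) (n, a, b) \<in> set (arc_labels as R)"
      using kind level_finite_label by simp
    then have "coprime (int m' - int m) (int y)" using reg_label_step kind by fastforce
    then have "m \<noteq> m'" using y_gt_1 by (cases "m = m'") auto
    then show ?thesis using add_mult_mod_neq[OF odd_y assms(1,2)] ok pq by simp
  next
    fix m e c b' e' assume "?p = Fin m e c" "?q = Infty b' e'"
    then show ?thesis using point_group_less[OF y_pos, of ?p r u] by simp
  next
    fix b e m' b' e' assume "?p = Infty b e" "?q = Fin m' b' e'"
    then show ?thesis using point_group_less[OF y_pos, of ?q r u] by simp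
  qed (use level_no_infty_arc[OF idx] in auto)
  then show ?thesis
    unfolding arcs_K_minus using place_in_verts assms(3) ab place_div_mod(1) sides by simp
qed

lemma piece_subdigraph_iso:
  assumes "x \<in> piece_indices"
  shows "subdigraph (piece x) (K_minus n_groups) \<and> digraph_iso (piece x) pattern"
proof -
  obtain r n u t where x: "x = (r, n, u, t)" "0 < r" "r < y" "n < length (level r)"
    using assms unfolding piece_indices_def by auto
  let ?f = "\<lambda>k. place y r u t (level r ! n ! k)"
  have pattern_arcs: "arcs pattern \<subseteq> verts pattern \<times> verts pattern"
    using arcs_less by (auto simp: pattern_def verts_def arcs_def)
  have inj: "inj_on ?f (verts pattern)"
    using place_inj[OF odd_y x(2,3)] level_point_ok[OF x(4)] blocks_ok_nth(2)[OF level_ok x(4)]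
    unfolding pattern_def verts_def inj_on_def by auto
  have verts: "?f ` verts pattern \<subseteq> verts (K_minus n_groups)"
    using place_in_verts[OF x(4)] by (auto simp: pattern_def verts_def)
  have arcs: "(\<lambda>(a, b). (?f a, ?f b)) ` arcs pattern \<subseteq> arcs (K_minus n_groups)"
    using piece_arc_in_K[OF x(2-4)] by (auto simp: pattern_def arcs_def)
  have "piece x = image_digraph ?f pattern" by (simp add: x(1) piece_def)
  then show ?thesis
    using subdigraph_image_digraph[OF verts arcs pattern_arcs]
      digraph_iso_image_digraph[OF inj pattern_arcs] by simp
qed

lemma arc_in_piece:
  assumes e: "(v, w) \<in> arcs (K_minus n_groups)"
  shows "\<exists>x \<in> piece_indices. (v, w) \<in> arcs (piece x)"
proof -
  obtain r n a b where x: "(r, n, a, b) \<in> base_arcs" "base_label (r, n, a, b) = arc_label y (v, w)"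
    using base_label_covers[OF e] by auto
  let ?p = "level r ! n ! a" and ?q = "level r ! n ! b"
  have idx: "0 < r" "r < y" "n < length (level r)" "(a, b) \<in> set as"
    and nab: "(n, a, b) \<in> set (arc_indices as (level r))"
    using x(1) unfolding base_arcs_def set_arc_indices by auto
  have "a < 7" "b < 7" using idx(4) arcs_less by auto
  then have ok: "point_ok ?p" "point_ok ?q" using level_point_ok[OF idx(3)] by auto
  have K: "fst v div 2 \<le> y" "fst w div 2 \<le> y" "fst v div 2 \<noteq> fst w div 2" "snd v < 7" "snd w < 7"
    using e unfolding arcs_K_minus verts_K_minus n_groups_def by (auto split: if_splits)
  obtain u t where ut: "u < y" "t < 7" "place y r u t ?p = v" "place y r u t ?q = w"
    using place_arc_exists[OF ok level_no_infty_arc[OF nab] K] x(2)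
    unfolding base_label_eq by metis
  have "(r, n, u, t) \<in> piece_indices" using idx ut unfolding piece_indices_def by simp
  moreover have "(v, w) \<in> arcs (piece (r, n, u, t))" using idx ut unfolding piece_arcs by blast
  ultimately show ?thesis by blast
qed

lemma piece_unique:
  assumes x: "(r, n, u, t) \<in> piece_indices" and x': "(r', n', u', t') \<in> piece_indices"
    and e: "e \<in> arcs (piece (r, n, u, t))" and e': "e \<in> arcs (piece (r', n', u', t'))"
  shows "(r, n, u, t) = (r', n', u', t')"
proof -
  obtain a b where ab: "(a, b) \<in> set as"
    "e = (place y r u t (level r ! n ! a), place y r u t (level r ! n ! b))"
    using e unfolding piece_arcs by blast
  obtain a' b' where ab': "(a', b') \<in> set as"
    "e = (place y r' u' t' (level r' ! n' ! a'), place y r' u' t' (level r' ! n' ! b'))"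
    using e' unfolding piece_arcs by blast
  have bounds: "0 < r" "r < y" "n < length (level r)" "u < y" "t < 7"
    "0 < r'" "r' < y" "n' < length (level r')" "u' < y" "t' < 7"
    using x x' unfolding piece_indices_def by auto
  have "base_label (r, n, a, b) = base_label (r', n', a', b')"
    using piece_arc_label bounds ab ab' by metis
  then have same: "r = r'" "n = n'" "a = a'" "b = b'"
    using base_label_inj bounds ab ab' unfolding base_arcs_def set_arc_indices by auto
  have idx: "(n, a, b) \<in> set (arc_indices as (level r))"
    using bounds ab unfolding set_arc_indices by simp
  have "a < 7" "b < 7" using ab arcs_less by auto
  moreover have "place y r u t (level r ! n ! a) = place y r u' t' (level r ! n ! a)"
    "place y r u t (level r ! n ! b) = place y r u' t' (level r ! n ! b)"
    using ab(2) ab'(2) unfolding same by simp_all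
  ultimately have "u = u' \<and> t = t'"
    using place_arc_unique[OF level_no_infty_arc[OF idx] level_point_ok level_point_ok] bounds same
    by blast
  then show ?thesis using same by simp
qed

theorem decomposition: "is_decomposition pattern (K_minus n_groups) (piece ` piece_indices)"
proof (rule is_decomposition_family)
  show "\<exists>x \<in> piece_indices. e \<in> arcs (piece x)" if "e \<in> arcs (K_minus n_groups)" for e
    using that arc_in_piece by (cases e) blast
  show "x = x'"
    if "x \<in> piece_indices" "x' \<in> piece_indices" "e \<in> arcs (piece x)" "e \<in> arcs (piece x')"
    for x x' e
    using that piece_unique by (cases x; cases x') blast
qed (rule piece_subdigraph_iso)

end

section \<open>The base blocks for \<open>D\<^sub>1, \<dots>, D\<^sub>8\<close>\<close>

definition reg_blocks :: "nat \<Rightarrow> point list list" where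
  "reg_blocks i = [
    [[Fin 0 1 4, Fin 1 0 0, Fin 2 1 0, Fin 1 1 5, Fin 0 1 0, Fin 1 1 4, Fin 2 1 3],
     [Fin 0 0 1, Fin 1 1 6, Fin 2 1 2, Fin 1 0 0, Fin 0 0 5, Fin 1 1 4, Fin 2 1 4],
     [Fin 0 1 4, Fin 1 0 3, Fin 2 0 3, Fin 1 1 5, Fin 0 0 6, Fin 1 0 5, Fin 2 0 6],
     [Fin 0 0 1, Fin 1 1 1, Fin 2 0 4, Fin 1 0 1, Fin 0 0 3, Fin 1 1 6, Fin 2 0 5]],
    [[Fin 0 0 2, Fin 1 0 4, Fin 2 1 4, Fin 1 0 6, Fin 0 0 3, Fin 1 1 6, Fin 2 0 2],
     [Fin 0 1 6, Fin 1 1 3, Fin 2 1 1, Fin 1 0 6, Fin 0 0 1, Fin 1 0 2, Fin 2 0 5],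
     [Fin 0 1 0, Fin 1 0 1, Fin 2 1 2, Fin 1 1 6, Fin 0 1 6, Fin 1 1 4, Fin 2 0 5],
     [Fin 0 1 3, Fin 1 1 4, Fin 2 0 4, Fin 1 1 2, Fin 0 0 6, Fin 1 0 5, Fin 2 1 2]],
    [[Fin 0 0 1, Fin 1 0 6, Fin 2 1 4, Fin 1 1 2, Fin 0 0 2, Fin 1 1 5, Fin 2 0 3],
     [Fin 0 1 4, Fin 1 1 3, Fin 2 1 1, Fin 1 1 1, Fin 0 0 4, Fin 1 0 3, Fin 2 1 5],
     [Fin 0 0 2, Fin 1 0 1, Fin 2 1 2, Fin 1 0 3, Fin 0 0 0, Fin 1 0 0, Fin 2 1 0],
     [Fin 0 0 1, Fin 1 1 2, Fin 2 0 6, Fin 1 0 3, Fin 0 1 0, Fin 1 1 4, Fin 2 1 0]],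
    [[Fin 0 0 3, Fin 1 1 0, Fin 2 1 3, Fin 1 0 0, Fin 0 1 6, Fin 1 0 6, Fin 2 0 5],
     [Fin 0 1 3, Fin 1 1 3, Fin 2 0 5, Fin 1 1 6, Fin 0 0 3, Fin 1 1 0, Fin 2 1 1],
     [Fin 0 1 1, Fin 1 0 1, Fin 2 0 5, Fin 1 0 0, Fin 0 0 4, Fin 1 1 6, Fin 2 1 4],
     [Fin 0 1 3, Fin 1 0 4, Fin 2 0 5, Fin 1 0 5, Fin 0 1 0, Fin 1 0 6, Fin 2 1 4]],
    [[Fin 0 0 5, Fin 1 1 2, Fin 2 0 0, Fin 1 0 6, Fin 0 0 1, Fin 1 0 0, Fin 2 1 6],
     [Fin 0 0 2, Fin 1 0 6, Fin 2 0 1, Fin 1 1 6, Fin 0 0 4, Fin 1 1 1, Fin 2 0 2],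
     [Fin 0 1 2, Fin 1 1 1, Fin 2 1 3, Fin 1 1 6, Fin 0 1 5, Fin 1 0 5, Fin 2 1 6],
     [Fin 0 1 6, Fin 1 1 6, Fin 2 1 4, Fin 1 0 4, Fin 0 0 1, Fin 1 1 4, Fin 2 0 1]],
    [[Fin 0 1 6, Fin 1 0 1, Fin 2 1 4, Fin 1 0 5, Fin 0 1 1, Fin 1 1 5, Fin 2 0 0],
     [Fin 0 1 0, Fin 1 0 3, Fin 2 1 4, Fin 1 0 2, Fin 0 1 4, Fin 1 1 4, Fin 2 1 3],
     [Fin 0 0 0, Fin 1 0 1, Fin 2 0 1, Fin 1 1 1, Fin 0 1 6, Fin 1 1 5, Fin 2 1 0],
     [Fin 0 0 3, Fin 1 1 0, Fin 2 0 6, Fin 1 0 4, Fin 0 0 1, Fin 1 0 6, Fin 2 0 0]],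
    [[Fin 0 1 5, Fin 1 0 1, Fin 2 1 6, Fin 1 1 5, Fin 0 1 1, Fin 1 0 0, Fin 2 0 5],
     [Fin 0 0 5, Fin 1 0 0, Fin 2 0 6, Fin 1 1 3, Fin 0 1 2, Fin 1 0 3, Fin 2 1 5],
     [Fin 0 1 0, Fin 1 0 4, Fin 2 0 4, Fin 1 0 0, Fin 0 0 3, Fin 1 1 2, Fin 2 1 5],
     [Fin 0 1 0, Fin 1 0 5, Fin 2 0 6, Fin 1 1 4, Fin 0 0 1, Fin 1 1 2, Fin 2 1 2]],
    [[Fin 0 1 4, Fin 1 1 2, Fin 2 1 2, Fin 1 1 5, Fin 0 1 6, Fin 1 1 3, Fin 2 0 5],
     [Fin 0 0 2, Fin 1 0 6, Fin 2 1 5, Fin 1 0 3, Fin 0 0 1, Fin 1 1 4, Fin 2 0 3],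
     [Fin 0 0 0, Fin 1 0 2, Fin 2 1 2, Fin 1 0 5, Fin 0 0 5, Fin 1 1 2, Fin 2 0 6],
     [Fin 0 1 1, Fin 1 0 1, Fin 2 0 4, Fin 1 1 5, Fin 0 0 0, Fin 1 1 2, Fin 2 1 0]]] ! (i - 1)"

text \<open>The special blocks arise from the regular ones by moving one point of each of the four
  blocks to \<open>\<infinity>\<close> and adding eight further blocks.\<close>

definition special_blocks :: "nat \<Rightarrow> point list list" where
  "special_blocks i = [
    [[Fin 0 1 4, Infty 1 4, Fin 2 1 0, Fin 1 1 5, Fin 0 1 0, Fin 1 1 4, Fin 2 1 3],
     [Infty 1 6, Fin 1 1 6, Fin 2 1 2, Fin 1 0 0, Fin 0 0 5, Fin 1 1 4, Fin 2 1 4],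
     [Fin 0 1 4, Fin 1 0 3, Fin 2 0 3, Infty 0 3, Fin 0 0 6, Fin 1 0 5, Fin 2 0 6],
     [Fin 0 0 1, Infty 0 4, Fin 2 0 4, Fin 1 0 1, Fin 0 0 3, Fin 1 1 6, Fin 2 0 5],
     [Infty 1 5, Fin 0 0 5, Infty 0 3, Fin 0 0 2, Infty 1 3, Fin 1 1 1, Fin 0 0 1],
     [Infty 0 6, Fin 0 1 2, Infty 0 3, Fin 2 1 4, Fin 0 0 1, Infty 0 5, Fin 0 1 3],
     [Fin 0 0 1, Fin 1 1 6, Infty 0 4, Fin 0 1 4, Infty 1 3, Fin 0 0 6, Infty 1 2],
     [Infty 1 4, Fin 0 1 1, Infty 1 2, Fin 0 0 0, Infty 0 3, Fin 1 1 5, Fin 0 0 6],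
     [Fin 0 1 4, Infty 1 5, Fin 0 1 0, Infty 0 6, Fin 0 1 2, Infty 0 2, Fin 1 0 0],
     [Fin 1 1 5, Infty 0 6, Fin 0 1 3, Infty 1 1, Fin 0 1 2, Infty 1 6, Fin 2 0 3],
     [Fin 0 0 3, Infty 1 3, Fin 0 0 4, Infty 0 5, Fin 1 0 0, Fin 2 1 0, Infty 0 2],
     [Infty 0 0, Fin 0 0 5, Infty 1 4, Fin 1 1 1, Fin 2 0 4, Infty 1 6, Fin 0 0 1]],
    [[Fin 0 0 2, Fin 1 0 4, Fin 2 1 4, Fin 1 0 6, Fin 0 0 3, Infty 0 2, Fin 2 0 2],
     [Fin 0 1 6, Fin 1 1 3, Fin 2 1 1, Fin 1 0 6, Fin 0 0 1, Fin 1 0 2, Infty 1 6],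
     [Fin 0 1 0, Fin 1 0 1, Fin 2 1 2, Fin 1 1 6, Fin 0 1 6, Infty 1 6, Fin 2 0 5],
     [Fin 0 1 3, Fin 1 1 4, Fin 2 0 4, Infty 0 4, Fin 0 0 6, Fin 1 0 5, Fin 2 1 2],
     [Fin 0 0 0, Infty 0 1, Fin 0 1 4, Infty 0 6, Fin 2 0 4, Fin 1 1 2, Infty 1 3],
     [Fin 0 1 5, Infty 0 0, Fin 0 1 4, Infty 1 1, Fin 1 1 2, Fin 0 0 6, Infty 0 1],
     [Infty 1 2, Fin 0 0 4, Infty 1 4, Fin 2 0 5, Fin 0 1 6, Infty 0 6, Fin 0 0 0],
     [Infty 0 6, Fin 0 1 0, Infty 0 0, Fin 0 0 3, Fin 1 1 6, Infty 1 2, Fin 0 1 5],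
     [Infty 1 4, Fin 0 0 5, Infty 1 0, Fin 1 1 6, Fin 2 0 2, Infty 0 6, Fin 0 0 3],
     [Infty 1 4, Fin 0 1 2, Infty 1 0, Fin 1 0 2, Fin 2 0 5, Infty 0 3, Fin 0 1 5],
     [Fin 0 1 0, Infty 1 3, Fin 0 0 3, Infty 1 6, Fin 1 1 4, Fin 2 0 5, Infty 0 6],
     [Infty 0 1, Fin 0 1 3, Infty 0 0, Fin 0 1 6, Fin 1 1 4, Infty 1 2, Fin 0 0 5]],
    [[Fin 0 0 1, Fin 1 0 6, Fin 2 1 4, Fin 1 1 2, Infty 1 5, Fin 1 1 5, Fin 2 0 3],
     [Fin 0 1 4, Fin 1 1 3, Fin 2 1 1, Fin 1 1 1, Infty 1 1, Fin 1 0 3, Fin 2 1 5],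
     [Fin 0 0 2, Fin 1 0 1, Fin 2 1 2, Infty 0 0, Fin 0 0 0, Fin 1 0 0, Fin 2 1 0],
     [Fin 0 0 1, Fin 1 1 2, Fin 2 0 6, Fin 1 0 3, Infty 0 3, Fin 1 1 4, Fin 2 1 0],
     [Infty 0 0, Fin 0 1 2, Infty 1 6, Fin 0 0 2, Fin 1 1 5, Infty 1 0, Fin 0 0 4],
     [Infty 0 5, Fin 0 0 4, Infty 1 6, Fin 0 1 5, Infty 0 1, Fin 1 0 3, Fin 0 0 0],
     [Infty 0 2, Fin 0 1 0, Fin 1 1 4, Infty 0 5, Fin 0 0 1, Infty 0 0, Fin 0 1 5],
     [Infty 1 4, Fin 0 1 6, Infty 0 0, Fin 1 0 3, Fin 2 1 2, Infty 0 1, Fin 0 1 5],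
     [Fin 0 0 5, Infty 1 2, Fin 1 0 3, Fin 0 0 4, Infty 1 5, Fin 0 1 1, Infty 0 1],
     [Fin 0 1 6, Infty 0 6, Fin 0 0 5, Infty 1 5, Fin 1 1 2, Fin 0 0 2, Infty 1 0],
     [Fin 0 0 0, Infty 1 2, Fin 0 1 0, Infty 1 6, Fin 1 1 1, Fin 0 0 4, Infty 0 6],
     [Infty 1 3, Fin 1 0 3, Fin 0 1 0, Infty 0 4, Fin 0 0 2, Infty 1 1, Fin 0 0 0]],
    [[Fin 0 0 3, Infty 0 3, Fin 2 1 3, Fin 1 0 0, Fin 0 1 6, Fin 1 0 6, Fin 2 0 5],
     [Fin 0 1 3, Fin 1 1 3, Fin 2 0 5, Fin 1 1 6, Fin 0 0 3, Fin 1 1 0, Infty 1 3],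
     [Fin 0 1 1, Fin 1 0 1, Fin 2 0 5, Infty 0 4, Fin 0 0 4, Fin 1 1 6, Fin 2 1 4],
     [Infty 1 4, Fin 1 0 4, Fin 2 0 5, Fin 1 0 5, Fin 0 1 0, Fin 1 0 6, Fin 2 1 4],
     [Fin 0 0 3, Infty 1 4, Fin 2 1 1, Fin 0 1 3, Infty 0 4, Fin 0 1 6, Infty 1 0],
     [Fin 0 0 3, Infty 1 1, Fin 0 1 4, Infty 0 0, Fin 0 0 4, Infty 1 5, Fin 1 1 0],
     [Infty 0 5, Fin 0 0 1, Infty 1 4, Fin 2 1 3, Fin 1 1 0, Infty 1 6, Fin 0 0 0],
     [Infty 0 1, Fin 0 0 6, Infty 1 5, Fin 0 0 5, Infty 0 3, Fin 0 0 4, Fin 1 0 0],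
     [Infty 0 5, Fin 0 1 3, Infty 0 3, Fin 0 0 6, Infty 1 2, Fin 1 1 0, Fin 2 1 1],
     [Fin 0 1 3, Infty 0 6, Fin 0 0 5, Infty 1 0, Fin 0 0 2, Infty 1 6, Fin 1 0 4],
     [Infty 0 2, Fin 0 1 1, Infty 1 6, Fin 0 1 0, Infty 0 6, Fin 2 1 4, Fin 0 1 3],
     [Fin 1 0 0, Infty 0 2, Fin 0 1 5, Infty 1 0, Fin 0 1 3, Infty 0 1, Fin 2 0 5]],
    [[Fin 0 0 5, Fin 1 1 2, Fin 2 0 0, Fin 1 0 6, Infty 0 6, Fin 1 0 0, Fin 2 1 6],
     [Fin 0 0 2, Fin 1 0 6, Fin 2 0 1, Fin 1 1 6, Fin 0 0 4, Infty 0 2, Fin 2 0 2],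
     [Fin 0 1 2, Infty 1 3, Fin 2 1 3, Fin 1 1 6, Fin 0 1 5, Fin 1 0 5, Fin 2 1 6],
     [Fin 0 1 6, Fin 1 1 6, Fin 2 1 4, Fin 1 0 4, Fin 0 0 1, Fin 1 1 4, Infty 1 6],
     [Fin 0 0 1, Infty 1 4, Fin 1 1 1, Fin 0 0 4, Infty 0 3, Fin 0 0 2, Infty 1 2],
     [Infty 0 3, Fin 0 1 2, Infty 1 1, Fin 0 1 0, Infty 1 6, Fin 0 0 1, Fin 1 0 0],
     [Infty 1 5, Fin 1 1 1, Fin 2 1 3, Infty 1 6, Fin 0 0 0, Infty 0 1, Fin 0 1 0],
     [Infty 0 5, Fin 2 0 1, Fin 1 1 4, Infty 1 1, Fin 0 1 6, Infty 0 6, Fin 0 1 0],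
     [Fin 0 1 3, Infty 1 1, Fin 0 0 6, Infty 0 4, Fin 2 0 1, Fin 0 1 6, Infty 0 5],
     [Infty 1 5, Fin 0 0 1, Infty 0 3, Fin 1 1 1, Fin 2 0 2, Infty 0 4, Fin 0 0 0],
     [Fin 0 1 3, Infty 0 3, Fin 0 1 0, Infty 0 5, Fin 1 1 1, Fin 0 1 2, Infty 0 6],
     [Infty 1 2, Fin 0 0 1, Fin 1 0 6, Infty 1 6, Fin 0 0 4, Infty 1 0, Fin 0 0 3]],
    [[Fin 0 1 6, Fin 1 0 1, Fin 2 1 4, Fin 1 0 5, Fin 0 1 1, Fin 1 1 5, Infty 1 6],
     [Fin 0 1 0, Fin 1 0 3, Infty 0 2, Fin 1 0 2, Fin 0 1 4, Fin 1 1 4, Fin 2 1 3],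
     [Fin 0 0 0, Fin 1 0 1, Fin 2 0 1, Fin 1 1 1, Infty 1 1, Fin 1 1 5, Fin 2 1 0],
     [Infty 0 0, Fin 1 1 0, Fin 2 0 6, Fin 1 0 4, Fin 0 0 1, Fin 1 0 6, Fin 2 0 0],
     [Fin 0 1 0, Infty 0 4, Fin 1 1 5, Fin 0 1 6, Infty 0 0, Fin 0 1 2, Infty 1 1],
     [Fin 0 0 3, Infty 0 0, Fin 0 0 4, Infty 1 2, Fin 0 1 4, Infty 0 2, Fin 1 1 0],
     [Fin 2 0 0, Infty 1 4, Fin 0 0 3, Infty 1 3, Fin 0 1 6, Infty 0 5, Fin 1 1 5],
     [Infty 0 6, Fin 0 0 5, Infty 1 1, Fin 2 0 0, Fin 0 1 6, Infty 0 2, Fin 0 0 1],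
     [Fin 0 0 4, Infty 1 2, Fin 0 0 3, Infty 0 0, Fin 1 0 2, Fin 2 1 4, Infty 0 6],
     [Infty 0 2, Fin 0 1 6, Infty 1 1, Fin 0 0 6, Infty 0 1, Fin 2 1 4, Fin 1 0 3],
     [Fin 0 0 3, Fin 2 0 0, Infty 1 0, Fin 0 1 1, Infty 1 3, Fin 0 1 5, Infty 1 2],
     [Fin 0 1 6, Fin 1 1 1, Infty 0 2, Fin 0 0 6, Infty 1 3, Fin 0 0 0, Infty 1 2]],
    [[Infty 0 1, Fin 1 0 1, Fin 2 1 6, Fin 1 1 5, Fin 0 1 1, Fin 1 0 0, Fin 2 0 5],
     [Fin 0 0 5, Fin 1 0 0, Fin 2 0 6, Infty 1 2, Fin 0 1 2, Fin 1 0 3, Fin 2 1 5],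
     [Fin 0 1 0, Fin 1 0 4, Fin 2 0 4, Infty 0 4, Fin 0 0 3, Fin 1 1 2, Fin 2 1 5],
     [Infty 1 2, Fin 1 0 5, Fin 2 0 6, Fin 1 1 4, Fin 0 0 1, Fin 1 1 2, Fin 2 1 2],
     [Fin 0 1 3, Infty 1 4, Fin 0 1 5, Fin 1 0 1, Infty 0 6, Fin 0 0 2, Infty 1 1],
     [Fin 0 1 3, Infty 0 3, Fin 2 0 4, Fin 1 0 0, Infty 0 6, Fin 0 1 4, Infty 0 1],
     [Fin 2 0 6, Infty 1 1, Fin 0 0 3, Infty 0 5, Fin 0 0 0, Infty 1 6, Fin 1 1 3],
     [Fin 0 0 3, Fin 1 0 0, Infty 1 0, Fin 0 0 5, Infty 1 1, Fin 0 0 4, Infty 1 4],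
     [Infty 1 3, Fin 0 1 1, Infty 0 4, Fin 0 1 4, Infty 1 2, Fin 0 1 0, Fin 1 0 5],
     [Infty 0 0, Fin 0 1 1, Infty 1 0, Fin 1 1 3, Fin 0 1 2, Infty 0 4, Fin 0 1 6],
     [Infty 1 3, Fin 2 1 2, Fin 0 1 0, Infty 0 3, Fin 0 0 0, Infty 0 4, Fin 0 0 2],
     [Fin 0 1 5, Infty 0 4, Fin 0 1 3, Infty 1 6, Fin 0 1 2, Infty 0 6, Fin 2 0 5]],
    [[Fin 0 1 4, Fin 1 1 2, Fin 2 1 2, Fin 1 1 5, Infty 1 3, Fin 1 1 3, Fin 2 0 5],
     [Fin 0 0 2, Fin 1 0 6, Fin 2 1 5, Infty 1 5, Fin 0 0 1, Fin 1 1 4, Fin 2 0 3],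
     [Fin 0 0 0, Fin 1 0 2, Fin 2 1 2, Fin 1 0 5, Fin 0 0 5, Fin 1 1 2, Infty 0 0],
     [Fin 0 1 1, Fin 1 0 1, Fin 2 0 4, Infty 0 0, Fin 0 0 0, Fin 1 1 2, Fin 2 1 0],
     [Fin 0 0 4, Infty 1 4, Fin 0 1 6, Fin 1 1 3, Infty 1 5, Fin 0 0 1, Infty 0 3],
     [Infty 0 1, Fin 1 1 5, Fin 2 0 4, Infty 0 2, Fin 0 1 3, Infty 0 0, Fin 0 1 6],
     [Infty 1 2, Fin 0 0 4, Infty 1 3, Fin 0 0 0, Infty 1 1, Fin 2 1 5, Fin 1 0 3],
     [Fin 2 0 6, Fin 1 1 2, Infty 0 4, Fin 0 0 2, Infty 0 0, Fin 0 1 0, Infty 1 4],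
     [Fin 1 1 5, Infty 1 6, Fin 0 1 4, Infty 0 4, Fin 0 1 3, Infty 1 2, Fin 0 0 0],
     [Fin 0 1 5, Infty 0 2, Fin 0 0 1, Fin 1 0 3, Infty 0 0, Fin 0 0 4, Infty 1 4],
     [Fin 1 1 5, Infty 1 2, Fin 0 0 0, Infty 1 1, Fin 0 0 5, Infty 0 4, Fin 0 1 6],
     [Infty 1 3, Fin 0 1 2, Infty 0 1, Fin 0 0 0, Fin 2 0 6, Infty 0 3, Fin 0 1 0]]] ! (i - 1)"

definition D_arc_list :: "nat \<Rightarrow> (nat \<times> nat) list" where
  "D_arc_list i = sorted_list_of_set (D_arcs i)"

lemma certificates_hold:
  "list_all (\<lambda>i. certificate (D_arc_list i) (reg_blocks i) (special_blocks i)) [1..<9]"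
  by code_simp

lemma set_D_arc_list: "set (D_arc_list i) = D_arcs i"
  unfolding D_arc_list_def by (simp add: D_arcs_def)

lemma D_arc_list_less: "(a, b) \<in> set (D_arc_list i) \<Longrightarrow> a < 7 \<and> b < 7"
  by (auto simp: set_D_arc_list D_arcs_def split: if_splits)

lemma certificate_D:
  "1 \<le> i \<Longrightarrow> i \<le> 8 \<Longrightarrow> certificate (D_arc_list i) (reg_blocks i) (special_blocks i)"
  using certificates_hold by (auto simp: list_all_iff)

theorem lemma3p1:
  fixes x i :: nat
  assumes "x \<ge> 3" and "1 \<le> i" and "i \<le> 8"
  shows "\<exists>\<D>. is_decomposition (Dgraph i) (K_minus x) \<D>"
proof -
  define y where "y = (if even x then x - 1 else x)"
  have y: "odd y" "1 < y" and x: "x = (if even x then y + 1 else y)"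
    using assms(1) unfolding y_def by auto
  interpret translation_decomposition "D_arc_list i" "reg_blocks i" "special_blocks i" y "even x"
    using certificate_D[OF assms(2,3)] y D_arc_list_less by unfold_locales auto
  have "n_groups = x" using x unfolding n_groups_def by simp
  moreover have "pattern = Dgraph i" unfolding pattern_def Dgraph_def set_D_arc_list ..
  ultimately show ?thesis using decomposition by metis
qed

end
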